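(* Let $M\ge 2$ be even, $T\ge 1$, $\mathcal{X}=\{\pm1,\pm3,\ldots,\pm(M-1)\}$ and $\mathcal{C}=\mathcal{X}^T\subset\mathbb{R}^T$. Let $\mathbf{y}\in\mathbb{R}^T$, $\mathbf{y}\neq\mathbf 0$. Let $\mathbf{x}^{\mathrm{opt}}$ be any maximizer of $(\hat{\mathbf{x}}'\mathbf{y})^2/\|\hat{\mathbf{x}}\|^2$ over $\hat{\mathbf{x}}\in\mathcal{C}$, let $h^{\mathrm{opt}}=(\mathbf{x}^{\mathrm{opt}})'\mathbf{y}/\|\mathbf{x}^{\mathrm{opt}}\|^2$ and $\lambda^{\mathrm{opt}}=1/h^{\mathrm{opt}}$. Then $|\lambda^{\mathrm{opt}}y_t|\le M+T-2$ for all $t=1,\ldots,T$.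
   Context: $(\cdot)'$ denotes transpose and $\|\cdot\|$ the Euclidean norm. This is noncoherent GLRT detection of $M$-ary PAM codewords of length $T$ over a real-valued block fading channel $\mathbf{y}=h\mathbf{x}+\mathbf{n}$; since $\mathbf{y}\ne\mathbf 0$ the maximum is positive so $h^{\mathrm{opt}}\neq0$. *)

theory Defs
  imports "HOL-Analysis.Analysis"
begin

definition pam :: "nat \<Rightarrow> real set" where
  "pam M = {of_int k | k::int. odd k \<and> \<bar>k\<bar> \<le> int M - 1}"

(* Codebook C = X^T : vectors indexed by {0..<T}, represented as nat => real
   functions that vanish outside {0..<T} (so each codeword is a unique object) *)
definition codebook :: "nat \<Rightarrow> nat \<Rightarrow> (nat \<Rightarrow> real) set" where
  "codebook M T = {x. (\<forall>t<T. x t \<in> pam M) \<and> (\<forall>t\<ge>T. x t = 0)}"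

definition inner_T :: "nat \<Rightarrow> (nat \<Rightarrow> real) \<Rightarrow> (nat \<Rightarrow> real) \<Rightarrow> real" where
  "inner_T T x y = (\<Sum>t<T. x t * y t)"

definition normsq_T :: "nat \<Rightarrow> (nat \<Rightarrow> real) \<Rightarrow> real" where
  "normsq_T T x = (\<Sum>t<T. (x t)^2)"

definition glrt_metric :: "nat \<Rightarrow> (nat \<Rightarrow> real) \<Rightarrow> (nat \<Rightarrow> real) \<Rightarrow> real" where
  "glrt_metric T y x = (inner_T T x y)^2 / normsq_T T x"

end

theory Submission
  imports Defs
begin

(* Let x be a GLRT-optimal codeword, a = x'y its correlation with
   y, n = |x|^2 and z = (n/a) y = lambda y the rescaled observation.
   (1) Local optimality: replacing one symbol x_t by another PAM symbol
       v = x_t + c cannot increase the metric, which rearranges to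
       c (z_t - x_t) <= c^2/2.  For the neighbouring symbols c = +-2 this says
       z_t - x_t <= 1 unless x_t = M-1, and z_t - x_t >= -1 unless x_t = -(M-1).
   (2) Hence every coordinate satisfies x_s z_s - x_s^2 >= -|x_s| >= -(M-1).
   (3) Since x'z = n = |x|^2, these T terms sum to zero, so any single term is
       at most (T-1)(M-1).
   (4) If |z_t| > M-1, step (1) forces x_t = sign(z_t)(M-1), and (3) gives
       (M-1)(|z_t| - (M-1)) <= (T-1)(M-1), i.e. |z_t| <= M+T-2.
   The file first collects facts about the PAM alphabet and about changing one
   coordinate of a codeword, then carries out (1)-(4) in a locale describing
   an optimal codeword; theorem1 interprets that locale.  When x'y = 0 the
   quantity 1/(x'y/n) is 0 in HOL and the claim is trivial. *)

lemma pamE: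
  assumes "v \<in> pam M"
  obtains k :: int where "v = of_int k" "odd k" "\<bar>k\<bar> \<le> int M - 1"
  using assms unfolding pam_def by blast

lemma pam_abs_bounds:
  assumes "v \<in> pam M"
  shows "1 \<le> \<bar>v\<bar>" and "\<bar>v\<bar> \<le> real M - 1"
proof -
  obtain k :: int where k: "v = of_int k" "odd k" "\<bar>k\<bar> \<le> int M - 1"
    using assms by (rule pamE)
  have "1 \<le> \<bar>k\<bar>" using k(2) by (cases "k = 0") auto
  then show "1 \<le> \<bar>v\<bar>" using k(1) by (metis of_int_1_le_iff of_int_abs)
  have "real_of_int \<bar>k\<bar> \<le> real_of_int (int M - 1)" using k(3) by (simp only: of_int_le_iff)
  then show "\<bar>v\<bar> \<le> real M - 1" using k(1) by simp
qed

lemma pam_uminus: "v \<in> pam M \<Longrightarrow> -v \<in> pam M"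
proof -
  assume "v \<in> pam M"
  then obtain k :: int where k: "v = of_int k" "odd k" "\<bar>k\<bar> \<le> int M - 1"
    by (rule pamE)
  then have "of_int (-k) \<in> pam M" unfolding pam_def by fastforce
  then show "-v \<in> pam M" using k(1) by simp
qed

(* Below the largest symbol M-1 the next symbol up, v+2, is again in the
   alphabet (this uses that M is even, so M-1 is the largest odd level). *)
lemma pam_step_up:
  assumes "v \<in> pam M" "even M" "v \<noteq> real M - 1"
  shows "v + 2 \<in> pam M" and "v \<le> real M - 3"
proof -
  obtain k :: int where k: "v = of_int k" "odd k" "\<bar>k\<bar> \<le> int M - 1"
    using assms(1) by (rule pamE)
  have "k \<noteq> int M - 1" using assms(3) k(1) by auto
  moreover have "even (int M)" using assms(2) by simp
  ultimately have k_le: "k \<le> int M - 3" using k by presburger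
  then have "real_of_int k \<le> real_of_int (int M - 3)" by (simp only: of_int_le_iff)
  then show "v \<le> real M - 3" using k(1) by simp
  have "of_int (k + 2) \<in> pam M" using k k_le unfolding pam_def by fastforce
  then show "v + 2 \<in> pam M" using k(1) by simp
qed

lemma pam_step_down:
  assumes "v \<in> pam M" "even M" "v \<noteq> -(real M - 1)"
  shows "v - 2 \<in> pam M" and "-(real M - 3) \<le> v"
proof -
  have "-v \<in> pam M" "-v \<noteq> real M - 1" using pam_uminus assms by auto
  from pam_step_up[OF this(1) assms(2) this(2)]
  show "v - 2 \<in> pam M" "-(real M - 3) \<le> v" using pam_uminus[of "-v + 2"] by auto
qed

lemma codebook_pam: "x \<in> codebook M T \<Longrightarrow> t < T \<Longrightarrow> x t \<in> pam M"
  unfolding codebook_def by blast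

lemma codebook_update: "x \<in> codebook M T \<Longrightarrow> t < T \<Longrightarrow> v \<in> pam M \<Longrightarrow> x(t := v) \<in> codebook M T"
  unfolding codebook_def by auto

lemma normsq_T_pos:
  assumes "x \<in> codebook M T" "T \<ge> 1"
  shows "normsq_T T x > 0"
  unfolding normsq_T_def
proof (rule sum_pos)
  have "0 \<in> {..<T}" using assms(2) by simp
  then show "finite {..<T}" "{..<T} \<noteq> {}" by auto
  fix i assume "i \<in> {..<T}"
  then have "1 \<le> \<bar>x i\<bar>" using pam_abs_bounds(1) codebook_pam[OF assms(1)] by blast
  then show "0 < (x i)^2" by simp
qed

lemma sum_update:
  fixes f g :: "nat \<Rightarrow> real"
  assumes "t < T" and "\<And>s. s \<noteq> t \<Longrightarrow> f s = g s"
  shows "(\<Sum>s<T. f s) = (\<Sum>s<T. g s) + (f t - g t)"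
proof -
  have "(\<Sum>s<T. f s) = f t + (\<Sum>s\<in>{..<T} - {t}. f s)" using assms by (simp add: sum.remove)
  also have "(\<Sum>s\<in>{..<T} - {t}. f s) = (\<Sum>s\<in>{..<T} - {t}. g s)" using assms(2) by simp
  also have "\<dots> = (\<Sum>s<T. g s) - g t" using assms by (simp add: sum_diff1)
  finally show ?thesis by simp
qed

lemma inner_T_update:
  "t < T \<Longrightarrow> inner_T T (x(t := v)) y = inner_T T x y + (v - x t) * y t"
  unfolding inner_T_def by (subst sum_update[where g = "\<lambda>s. x s * y s"]) (auto simp: algebra_simps)

lemma normsq_T_update:
  "t < T \<Longrightarrow> normsq_T T (x(t := v)) = normsq_T T x + 2 * (v - x t) * x t + (v - x t)^2"
  unfolding normsq_T_def
  by (subst sum_update[where g = "\<lambda>s. (x s)^2"]) (auto simp: algebra_simps power2_eq_square)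

(* The algebra behind local optimality: if perturbing the correlation a by c*y
   and the energy n by 2cx + c^2 does not increase a^2/n, then with
   z = (n/a) y we get c (z - x) <= c^2/2 (the dropped term c^2 z^2/n is >= 0). *)
lemma metric_gain_bound:
  fixes a n c y x :: real
  assumes "n > 0" "a \<noteq> 0"
    and "(a + c * y)^2 * n \<le> a^2 * (n + 2 * c * x + c^2)"
  shows "c * (n / a * y - x) \<le> c^2 / 2"
proof -
  define z where "z = n / a * y"
  have y: "y = a * z / n" using assms(1,2) by (simp add: z_def field_simps)
  have "(a + c * y)^2 * n = a^2 * (n + 2 * c * z + c^2 * z^2 / n)"
    unfolding y using assms(1) by (simp add: field_simps power2_eq_square)
  with assms(3) have "a^2 * (n + 2 * c * z + c^2 * z^2 / n) \<le> a^2 * (n + 2 * c * x + c^2)"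
    by simp
  moreover have "a^2 > 0" using assms(2) by simp
  ultimately have "n + 2 * c * z + c^2 * z^2 / n \<le> n + 2 * c * x + c^2" by simp
  moreover have "c^2 * z^2 / n \<ge> 0" using assms(1) by simp
  ultimately show ?thesis unfolding z_def by (simp add: algebra_simps)
qed

locale glrt_optimum =
  fixes M T :: nat and y x :: "nat \<Rightarrow> real"
  assumes even_M: "even M"
    and T_pos: "T \<ge> 1"
    and x_code: "x \<in> codebook M T"
    and x_opt: "\<forall>w\<in>codebook M T. glrt_metric T y w \<le> glrt_metric T y x"
    and corr_nz: "inner_T T x y \<noteq> 0"
begin

(* The channel estimate is h = x'y/|x|^2; the scale is lambda = 1/h. *)
definition scale :: real where
  "scale = normsq_T T x / inner_T T x y"

abbreviation z :: "nat \<Rightarrow> real" where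
  "z s \<equiv> scale * y s"

lemma x_pam: "s < T \<Longrightarrow> x s \<in> pam M"
  using codebook_pam[OF x_code] .

(* Step (1): no single-symbol change improves the metric. *)
lemma local_optimality:
  assumes "t < T" "v \<in> pam M"
  shows "(v - x t) * (z t - x t) \<le> (v - x t)^2 / 2"
proof -
  define a n c where "a = inner_T T x y" and "n = normsq_T T x" and "c = v - x t"
  have w: "x(t := v) \<in> codebook M T" using codebook_update[OF x_code assms] .
  have n_pos: "n > 0" unfolding n_def using normsq_T_pos[OF x_code T_pos] .
  have n'_pos: "n + 2 * c * x t + c^2 > 0"
    using normsq_T_pos[OF w T_pos] normsq_T_update[OF assms(1)] by (simp add: n_def c_def)
  have "(a + c * y t)^2 / (n + 2 * c * x t + c^2) \<le> a^2 / n"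
    using x_opt w inner_T_update[OF assms(1)] normsq_T_update[OF assms(1)]
    unfolding glrt_metric_def a_def n_def c_def by metis
  then have "(a + c * y t)^2 * n \<le> a^2 * (n + 2 * c * x t + c^2)"
    using n_pos n'_pos by (simp add: divide_simps)
  from metric_gain_bound[OF n_pos _ this] corr_nz
  show ?thesis by (simp add: a_def n_def c_def scale_def)
qed

lemma step_up_bound: "t < T \<Longrightarrow> x t \<noteq> real M - 1 \<Longrightarrow> z t - x t \<le> 1"
  using local_optimality[of t "x t + 2"] pam_step_up(1)[OF x_pam even_M]
  by (simp add: power2_eq_square)

lemma step_down_bound: "t < T \<Longrightarrow> x t \<noteq> -(real M - 1) \<Longrightarrow> -1 \<le> z t - x t"
  using local_optimality[of t "x t - 2"] pam_step_down(1)[OF x_pam even_M]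
  by (simp add: power2_eq_square)

lemma coordinate_lower_bound:
  assumes "s < T"
  shows "-(real M - 1) \<le> x s * z s - (x s)^2"
proof -
  have "-\<bar>x s\<bar> \<le> x s * (z s - x s)"
  proof (cases "x s > 0")
    case True
    then have "-1 \<le> z s - x s" using step_down_bound[OF assms] pam_abs_bounds(2)[OF x_pam[OF assms]]
      by force
    then show ?thesis using True mult_left_mono[of "-1" "z s - x s" "x s"] by simp
  next
    case False
    then have "z s - x s \<le> 1" using step_up_bound[OF assms] pam_abs_bounds[OF x_pam[OF assms]]
      by force
    then show ?thesis using False mult_left_mono_neg[of "z s - x s" 1 "x s"] by simp
  qed
  then show ?thesis using pam_abs_bounds(2)[OF x_pam[OF assms]]
    by (simp add: algebra_simps power2_eq_square)
qed

(* Step (3a): x'z = |x|^2, because z is y rescaled by |x|^2 / x'y. *)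
lemma excess_sum_zero: "(\<Sum>s<T. x s * z s - (x s)^2) = 0"
proof -
  have "(\<Sum>s<T. x s * z s) = scale * inner_T T x y"
    unfolding inner_T_def by (simp add: sum_distrib_left algebra_simps)
  also have "\<dots> = normsq_T T x" using corr_nz by (simp add: scale_def)
  finally show ?thesis by (simp add: sum_subtractf normsq_T_def)
qed

lemma coordinate_upper_bound:
  assumes "t < T"
  shows "x t * z t - (x t)^2 \<le> (real T - 1) * (real M - 1)"
proof -
  define e where "e s = x s * z s - (x s)^2" for s
  have "0 = e t + (\<Sum>s\<in>{..<T} - {t}. e s)"
    using excess_sum_zero assms by (simp add: e_def sum.remove)
  moreover have "(\<Sum>s\<in>{..<T} - {t}. -(real M - 1)) \<le> (\<Sum>s\<in>{..<T} - {t}. e s)"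
  proof (rule sum_mono)
    fix s assume "s \<in> {..<T} - {t}"
    then show "-(real M - 1) \<le> e s" unfolding e_def using coordinate_lower_bound by blast
  qed
  moreover have "(\<Sum>s\<in>{..<T} - {t}. -(real M - 1)) = -(real T - 1) * (real M - 1)"
    using assms by (simp add: card_Diff_singleton algebra_simps)
  ultimately show ?thesis unfolding e_def by linarith
qed

theorem scaled_observation_bound:
  assumes "t < T"
  shows "\<bar>z t\<bar> \<le> real M + real T - 2"
proof -
  have M1: "1 \<le> real M - 1"
    using pam_abs_bounds[OF x_pam[OF assms]] by linarith
  have extreme: "\<bar>z t\<bar> \<le> real M + real T - 2"
    if "x t * z t = (real M - 1) * \<bar>z t\<bar>" "\<bar>x t\<bar> = real M - 1"
  proof -
    have "(x t)^2 = (real M - 1)^2" using that(2) by (metis power2_abs)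
    then have "(real M - 1) * (\<bar>z t\<bar> - (real M - 1)) \<le> (real M - 1) * (real T - 1)"
      using coordinate_upper_bound[OF assms] that(1) by (simp add: algebra_simps power2_eq_square)
    then show ?thesis using M1 by (simp add: mult_le_cancel_left)
  qed
  consider "\<bar>z t\<bar> \<le> real M - 1" | "z t > real M - 1" | "z t < -(real M - 1)" by linarith
  then show ?thesis
  proof cases
    case 1
    then show ?thesis using T_pos by simp
  next
    case 2
    then have "x t = real M - 1"
      using step_up_bound[OF assms] pam_step_up(2)[OF x_pam[OF assms] even_M] by force
    then show ?thesis using 2 M1 extreme by simp
  next
    case 3
    then have xt: "x t = -(real M - 1)"
      using step_down_bound[OF assms] pam_step_down(2)[OF x_pam[OF assms] even_M] by force
    have "\<bar>z t\<bar> = - z t" using 3 M1 by simp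
    then have "x t * z t = (real M - 1) * \<bar>z t\<bar>" unfolding xt by (simp add: algebra_simps)
    then show ?thesis using xt M1 by (intro extreme) simp_all
  qed
qed

end

theorem theorem1:
  fixes M T :: nat and y xopt :: "nat \<Rightarrow> real"
  assumes "M \<ge> 2" and "even M" and "T \<ge> 1"
    and "\<exists>t<T. y t \<noteq> 0"
    and "xopt \<in> codebook M T"
    and "\<forall>x\<in>codebook M T. glrt_metric T y x \<le> glrt_metric T y xopt"
  shows "\<forall>t<T. \<bar>(1 / (inner_T T xopt y / normsq_T T xopt)) * y t\<bar> \<le> real M + real T - 2"
proof (intro allI impI)
  fix t assume t: "t < T"
  show "\<bar>(1 / (inner_T T xopt y / normsq_T T xopt)) * y t\<bar> \<le> real M + real T - 2"
  proof (cases "inner_T T xopt y = 0")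
    case True
    then show ?thesis using assms(1,3) by simp
  next
    case False
    then interpret glrt_optimum M T y xopt
      using assms(2,3,5,6) by unfold_locales
    show ?thesis using scaled_observation_bound[OF t] by (simp add: scale_def)
  qed
qed

end
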